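(* Let $n,k,d$ be positive integers with $k \le d < n$, and let $\alpha>0$. For every integer $i$ with $1 \le i \le k$, $$ C^{\text{exact}}_{n,k,d}\!\left(\alpha,\frac{(d-k+i)\alpha}{d-k+1}\right) \;\geq\; \frac{n i \alpha}{n-k+i}. $$
   Context: A distributed storage system (regenerating code) with parameters $(n,k,d)$, node size $\alpha$ and total repair bandwidth $\gamma$ stores a file on $n$ nodes, each node storing an amount $\alpha$ of information, such that the file can be reconstructed from the contents of any $k$ nodes, and any lost node can be repaired by contacting any $d$ of the remaining nodes, each of which transmits an amount $\beta=\gamma/d$ to the new node. The code has exact repair if the repaired node stores exactly the same content as the lost node. $C^{\text{exact}}_{n,k,d}(\alpha,\gamma)$ denotes the capacity (maximum storable file size) of exact-repair codes with these parameters. Amounts of information are treated as arbitrarily divisible, so capacities are positively homogeneous: $C^{\text{exact}}_{n,k,d}(c\alpha,c\gamma)=c\,C^{\text{exact}}_{n,k,d}(\alpha,\gamma)$ for $c>0$. *)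

theory Defs
  imports Complex_Main
begin

text \<open>Zero-error exact-repair regenerating code with nodes 0..n-1 storing a file
  x from the file set {..<N}. Node j stores f j x; the alphabet actually used by
  node j has at most 2 powr alpha symbols (alpha bits). For a failed node j and any
  helper set H of d other nodes, helper h sends phi j H h (f h x), using at most
  2 powr beta distinct messages (beta bits); the messages determine f j x exactly.\<close>

definition exact_code ::
  "nat \<Rightarrow> nat \<Rightarrow> nat \<Rightarrow> real \<Rightarrow> real \<Rightarrow> nat \<Rightarrow> (nat \<Rightarrow> nat \<Rightarrow> nat)
   \<Rightarrow> (nat \<Rightarrow> nat set \<Rightarrow> nat \<Rightarrow> nat \<Rightarrow> nat) \<Rightarrow> bool" where
  "exact_code n k d alpha beta N f phi \<longleftrightarrow>
     (\<forall>j<n. real (card (f j ` {..<N})) \<le> 2 powr alpha) \<and>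
     (\<forall>K. K \<subseteq> {..<n} \<and> card K = k \<longrightarrow>
        (\<forall>x<N. \<forall>y<N. (\<forall>i\<in>K. f i x = f i y) \<longrightarrow> x = y)) \<and>
     (\<forall>j<n. \<forall>H. H \<subseteq> {..<n} - {j} \<and> card H = d \<longrightarrow>
        (\<forall>h\<in>H. real (card (phi j H h ` f h ` {..<N})) \<le> 2 powr beta) \<and>
        (\<forall>x<N. \<forall>y<N. (\<forall>h\<in>H. phi j H h (f h x) = phi j H h (f h y)) \<longrightarrow> f j x = f j y))"

text \<open>Capacity: information is arbitrarily divisible, so we normalise by a scale t > 0:
  the best file size (in bits) of a code with node size t*alpha and per-helper
  bandwidth t*gamma/d, divided by t, supremised over t.\<close>

definition C_exact :: "nat \<Rightarrow> nat \<Rightarrow> nat \<Rightarrow> real \<Rightarrow> real \<Rightarrow> real" where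
  "C_exact n k d alpha gamma =
     (SUP t\<in>{0<..}. Sup {log 2 (real N) | N f phi.
         N \<ge> 1 \<and> exact_code n k d (t * alpha) (t * gamma / real d) N f phi} / t)"

end

(*
  The bound is attained by an explicit linear code over a prime field F_p with p > n (d - k + 1).
  For every set R of r = n - k + i nodes, every copy c < n! and every labelling a : R -> {..<s}
  with s = d - k + 1, the nodes of R hold a codeword of the length-r code cut out by the n - k
  checks  sum_{m in R} x(m, a m)^t w_m = 0,  where the points x(m, u) = m s + u are distinct mod p.
  Any k nodes miss at most n - k coordinates of each codeword, and the Vandermonde checks recover them.
  To repair node j, sum the checks over the s labels of j: a window of d - k + i of the helpers in R,
  rotating with c, sends the label sums of its symbols, which leaves s + (r - 1) - (d - k + i) = n - k
  unknowns, again a Vandermonde system. Counting symbols, messages and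
  |code| >= p ^ (#symbols - #checks) gives the claimed ratios of file size and repair bandwidth
  to node size.
*)

theory Submission
  imports Defs "HOL-Computational_Algebra.Polynomial" "HOL-Computational_Algebra.Primes"
    "HOL-Number_Theory.Cong" "HOL-Library.FuncSet" "HOL-Library.Countable_Set"
    "HOL-Combinatorics.Transposition"
begin

lemma prime_dvd_vandermonde_combination:
  fixes p :: int and g z :: "'i \<Rightarrow> int"
  assumes p: "prime p" and fin: "finite I" and card_I: "card I \<le> T"
    and distinct: "\<And>i i'. i \<in> I \<Longrightarrow> i' \<in> I \<Longrightarrow> i \<noteq> i' \<Longrightarrow> \<not> p dvd (g i - g i')"
    and checks: "\<And>t. t < T \<Longrightarrow> p dvd (\<Sum>i\<in>I. g i ^ t * z i)"
    and i0: "i0 \<in> I"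
  shows "p dvd z i0"
proof -
  define Q where "Q = (\<Prod>i\<in>I - {i0}. [:- g i, 1:])"
  have "degree Q = card (I - {i0})"
    unfolding Q_def by (subst degree_prod_eq_sum_degree) auto
  then have deg_Q: "degree Q < T"
    using card_I i0 fin by (metis card_Diff1_less le_trans not_le)
  have "p dvd (\<Sum>t\<le>degree Q. coeff Q t * (\<Sum>i\<in>I. g i ^ t * z i))"
    using deg_Q checks by (intro dvd_sum) auto
  also have "(\<Sum>t\<le>degree Q. coeff Q t * (\<Sum>i\<in>I. g i ^ t * z i)) = (\<Sum>i\<in>I. z i * poly Q (g i))"
    by (simp add: poly_altdef sum_distrib_left sum_distrib_right sum.swap[of _ I] algebra_simps)
  also have "\<dots> = z i0 * poly Q (g i0)"
  proof -
    have "poly Q (g i) = 0" if "i \<in> I - {i0}" for i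
      unfolding Q_def poly_prod using fin that by (intro prod_zero) auto
    then show ?thesis using fin i0 by (simp add: sum.remove)
  qed
  finally have "p dvd z i0 * poly Q (g i0)" .
  moreover have "\<not> p dvd poly Q (g i0)"
  proof
    assume "p dvd poly Q (g i0)"
    then have "p dvd (\<Prod>i\<in>I - {i0}. g i0 - g i)" unfolding Q_def poly_prod by simp
    then obtain i where "i \<in> I - {i0}" "p dvd g i0 - g i"
      using prime_dvd_prod_iff[OF _ p, of "I - {i0}" "\<lambda>i. g i0 - g i"] fin by auto
    then show False using distinct i0 by auto
  qed
  ultimately show ?thesis using p prime_dvd_mult_iff by blast
qed

lemma card_rotated_window:
  fixes x c e :: nat
  assumes "0 < x" "e \<le> x"
  shows "card {v\<in>{..<x}. (v + c) mod x < e} = e"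
proof -
  have "inj_on (\<lambda>v. (v + c) mod x) {..<x}"
    by (rule inj_onI) (auto simp: cong_def[symmetric] cong_add_rcancel_nat dest: cong_less_modulus_unique_nat)
  moreover have "(\<lambda>v. (v + c) mod x) ` {..<x} \<subseteq> {..<x}" using assms by auto
  ultimately have "bij_betw (\<lambda>v. (v + c) mod x) {..<x} {..<x}"
    by (simp add: bij_betw_def card_image card_subset_eq)
  then have "card {v\<in>{..<x}. (v + c) mod x < e} = card {w\<in>{..<x}. w < e}"
    by (intro bij_betw_same_card[OF bij_betw_Collect]) auto
  also have "{w\<in>{..<x}. w < e} = {..<e}" using assms by auto
  finally show ?thesis by simp
qed

lemma card_rotated_window_periods:
  fixes x e q c :: nat
  assumes "0 < x" "e \<le> x"
  shows "card {b\<in>{..<x * q}. (c + b) mod x < e} = q * e"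
proof -
  let ?W = "{v\<in>{..<x}. (v + c) mod x < e}"
  have shift: "(c + (x * a + v)) mod x = (v + c) mod x" for a v
    by (metis add.commute add.left_commute mod_mult_self2 mult.commute)
  have small: "x * a + v < x * q" if "a < q" "v < x" for a v
  proof -
    have "x * a + v < x * (a + 1)" using that by simp
    also have "\<dots> \<le> x * q" using that by (intro mult_le_mono2) simp
    finally show ?thesis .
  qed
  have "bij_betw (\<lambda>(a, v). x * a + v) ({..<q} \<times> ?W) {b\<in>{..<x * q}. (c + b) mod x < e}"
  proof (rule bij_betw_byWitness[where f' = "\<lambda>b. (b div x, b mod x)"])
    show "\<forall>y\<in>{..<q} \<times> ?W. (\<lambda>b. (b div x, b mod x)) ((\<lambda>(a, v). x * a + v) y) = y"
      by auto
    show "\<forall>b\<in>{b\<in>{..<x * q}. (c + b) mod x < e}. (\<lambda>(a, v). x * a + v) (b div x, b mod x) = b"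
      by simp
    show "(\<lambda>(a, v). x * a + v) ` ({..<q} \<times> ?W) \<subseteq> {b\<in>{..<x * q}. (c + b) mod x < e}"
      using small shift by auto
    have "b div x < q" if "b < x * q" for b
      using that by (simp add: less_mult_imp_div_less mult.commute)
    moreover have "(b mod x + c) mod x = (c + b) mod x" for b
      by (metis add.commute mod_add_left_eq)
    ultimately show "(\<lambda>b. (b div x, b mod x)) ` {b\<in>{..<x * q}. (c + b) mod x < e} \<subseteq> {..<q} \<times> ?W"
      using assms(1) by auto
  qed
  then have "card ({..<q} \<times> ?W) = card {b\<in>{..<x * q}. (c + b) mod x < e}"
    by (rule bij_betw_same_card)
  then show ?thesis using card_rotated_window[OF assms] by (simp add: card_cartesian_product)
qed

lemma card_enumerated_window:
  assumes "finite S" "e \<le> card S"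
  shows "card {h\<in>S. (to_nat_on S h + c) mod card S < e} = e"
proof (cases "S = {}")
  case False
  have "card {h\<in>S. (to_nat_on S h + c) mod card S < e} = card {v\<in>{..<card S}. (v + c) mod card S < e}"
    by (intro bij_betw_same_card[OF bij_betw_Collect[OF to_nat_on_finite[OF assms(1)]]]) auto
  also have "\<dots> = e" using False assms by (intro card_rotated_window) auto
  finally show ?thesis .
qed (use assms in simp)

lemma sum_members_transpose:
  assumes closed: "\<And>R. R \<in> F \<Longrightarrow> transpose a b ` R \<in> F"
    and invariant: "\<And>R. R \<in> F \<Longrightarrow> w (transpose a b ` R) = w R"
  shows "(\<Sum>R\<in>{R\<in>F. a \<in> R}. w R) = (\<Sum>R\<in>{R\<in>F. b \<in> R}. w R)"
proof -
  have involution: "transpose a b ` transpose a b ` R = R" for R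
    by (simp add: image_comp)
  have swap_member: "transpose a b ` R \<in> {R\<in>F. y \<in> R}"
    if "R \<in> F" "x \<in> R" "transpose a b x = y" for R x y
    using that closed by (auto intro: rev_image_eqI)
  have "bij_betw (image (transpose a b)) {R\<in>F. a \<in> R} {R\<in>F. b \<in> R}"
  proof (rule bij_betw_byWitness[where f' = "image (transpose a b)"])
    show "image (transpose a b) ` {R\<in>F. a \<in> R} \<subseteq> {R\<in>F. b \<in> R}"
      using swap_member[of _ a b] by auto
    show "image (transpose a b) ` {R\<in>F. b \<in> R} \<subseteq> {R\<in>F. a \<in> R}"
      using swap_member[of _ b a] by auto
  qed (simp_all only: involution, simp_all)
  then have "(\<Sum>R\<in>{R\<in>F. b \<in> R}. w R) = (\<Sum>R\<in>{R\<in>F. a \<in> R}. w (transpose a b ` R))"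
    using sum.reindex_bij_betw by metis
  also have "\<dots> = (\<Sum>R\<in>{R\<in>F. a \<in> R}. w R)" using invariant by (intro sum.cong) auto
  finally show ?thesis by simp
qed

lemma sum_members_eq_sum_card_Int:
  fixes w :: "'a set \<Rightarrow> 'b::comm_semiring_1"
  assumes "finite U" "finite F"
  shows "(\<Sum>j\<in>U. \<Sum>R\<in>{R\<in>F. j \<in> R}. w R) = (\<Sum>R\<in>F. of_nat (card (R \<inter> U)) * w R)"
proof -
  have "(\<Sum>j\<in>U. \<Sum>R\<in>{R\<in>F. j \<in> R}. w R) = (\<Sum>j\<in>U. \<Sum>R\<in>F. if j \<in> R then w R else 0)"
    using assms(2) by (simp add: sum.inter_filter)
  also have "\<dots> = (\<Sum>R\<in>F. \<Sum>j\<in>U. if j \<in> R then w R else 0)" by (rule sum.swap)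
  also have "\<dots> = (\<Sum>R\<in>F. of_nat (card (R \<inter> U)) * w R)"
    using assms(1) by (simp add: sum.If_cases Int_commute)
  finally show ?thesis .
qed

lemma eq_of_dvd_diff:
  fixes P a b :: int
  assumes "a \<in> {0..<P}" "b \<in> {0..<P}" "P dvd a - b"
  shows "a = b"
proof -
  have "a mod P = b mod P" using assms(3) by (simp add: mod_eq_dvd_iff)
  then show ?thesis using assms(1,2) by simp
qed

lemma exact_code_card_le:
  assumes code: "exact_code n k d A B N f phi" and "k \<le> n"
  shows "real N \<le> 2 powr (real k * A)"
proof -
  define K where "K = {..<k}"
  have K: "K \<subseteq> {..<n}" "card K = k" "finite K" using assms(2) unfolding K_def by auto
  define g where "g x = (\<lambda>m\<in>K. f m x)" for x
  have "inj_on g {..<N}"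
  proof (rule inj_onI)
    fix x y assume "x \<in> {..<N}" "y \<in> {..<N}" "g x = g y"
    moreover have "\<forall>m\<in>K. f m x = f m y" using \<open>g x = g y\<close> unfolding g_def by (metis restrict_apply')
    ultimately show "x = y" using code K unfolding exact_code_def by auto
  qed
  then have "N = card (g ` {..<N})" by (simp add: card_image)
  also have "\<dots> \<le> card (PiE K (\<lambda>m. f m ` {..<N}))"
    using K by (intro card_mono) (auto simp: finite_PiE g_def)
  also have "\<dots> = (\<Prod>m\<in>K. card (f m ` {..<N}))" using K by (simp add: card_PiE)
  finally have "real N \<le> (\<Prod>m\<in>K. real (card (f m ` {..<N})))" by (metis of_nat_le_iff of_nat_prod)
  also have "\<dots> \<le> (\<Prod>m\<in>K. 2 powr A)"
    using code K unfolding exact_code_def by (intro prod_mono) auto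
  also have "\<dots> = 2 powr (real k * A)" using K by (simp add: powr_realpow[symmetric] powr_powr mult.commute)
  finally show ?thesis .
qed

lemma C_exact_ge_of_code:
  assumes "k \<le> n" "0 < alpha" "0 \<le> gamma" "0 < A" "1 \<le> N"
    and code: "exact_code n k d A (A * gamma / (alpha * real d)) N f phi"
  shows "alpha * log 2 (real N) / A \<le> C_exact n k d alpha gamma"
proof -
  define S where "S t = {log 2 (real N) | N f phi.
    N \<ge> 1 \<and> exact_code n k d (t * alpha) (t * gamma / real d) N f phi}" for t
  have S_nonempty: "S t \<noteq> {}" if "0 < t" for t
  proof -
    have "exact_code n k d (t * alpha) (t * gamma / real d) 1 (\<lambda>_ _. 0) (\<lambda>_ _ _ _. 0)"
      unfolding exact_code_def using that assms by (auto intro!: ge_one_powr_ge_zero)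
    then show ?thesis unfolding S_def by blast
  qed
  have S_bound: "z \<le> real k * (t * alpha)" if z: "z \<in> S t" for z t
  proof -
    obtain N f phi where N: "z = log 2 (real N)" "N \<ge> 1"
      "exact_code n k d (t * alpha) (t * gamma / real d) N f phi"
      using z unfolding S_def by blast
    then have "log 2 (real N) \<le> log 2 (2 powr (real k * (t * alpha)))"
      using exact_code_card_le[OF N(3) assms(1)] by (subst log_le_cancel_iff) auto
    then show ?thesis using N(1) by simp
  qed
  have bdd: "bdd_above ((\<lambda>t. Sup (S t) / t) ` {0<..})"
  proof (rule bdd_aboveI2)
    fix t :: real assume "t \<in> {0<..}"
    then have "Sup (S t) \<le> real k * (t * alpha)" using S_nonempty S_bound by (intro cSup_least) auto
    then show "Sup (S t) / t \<le> real k * alpha"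
      using \<open>t \<in> {0<..}\<close> by (simp add: divide_le_eq mult.commute mult.left_commute)
  qed
  define t0 where "t0 = A / alpha"
  have t0: "0 < t0" "t0 * alpha = A" "t0 * gamma / real d = A * gamma / (alpha * real d)"
    unfolding t0_def using assms by auto
  have "log 2 (real N) \<in> S t0" unfolding S_def t0 using assms(5) code by blast
  then have "log 2 (real N) / t0 \<le> Sup (S t0) / t0"
    using S_bound t0(1) by (intro divide_right_mono cSup_upper bdd_aboveI) auto
  also have "\<dots> \<le> C_exact n k d alpha gamma"
    unfolding C_exact_def S_def[symmetric] using t0(1) bdd by (intro cSUP_upper) auto
  finally show ?thesis unfolding t0_def using assms by (simp add: field_simps)
qed

lemma exact_code_of_set_code:
  fixes C :: "'w set" and node :: "nat \<Rightarrow> 'w \<Rightarrow> 'v" and msg :: "nat \<Rightarrow> nat set \<Rightarrow> nat \<Rightarrow> 'v \<Rightarrow> 'm"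
  assumes "finite C"
    and node_size: "\<And>j. j < n \<Longrightarrow> real (card (node j ` C)) \<le> 2 powr A"
    and decode: "\<And>K x y. K \<subseteq> {..<n} \<Longrightarrow> card K = k \<Longrightarrow> x \<in> C \<Longrightarrow> y \<in> C \<Longrightarrow>
                   (\<forall>m\<in>K. node m x = node m y) \<Longrightarrow> x = y"
    and msg_size: "\<And>j H h. j < n \<Longrightarrow> H \<subseteq> {..<n} - {j} \<Longrightarrow> card H = d \<Longrightarrow> h \<in> H \<Longrightarrow>
                     real (card (msg j H h ` node h ` C)) \<le> 2 powr B"
    and repair: "\<And>j H x y. j < n \<Longrightarrow> H \<subseteq> {..<n} - {j} \<Longrightarrow> card H = d \<Longrightarrow> x \<in> C \<Longrightarrow> y \<in> C \<Longrightarrow>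
                   (\<forall>h\<in>H. msg j H h (node h x) = msg j H h (node h y)) \<Longrightarrow> node j x = node j y"
  shows "exact_code n k d A B (card C)
           (\<lambda>j x. to_nat_on (node j ` C) (node j (from_nat_into C x)))
           (\<lambda>j H h v. to_nat_on (msg j H h ` node h ` C) (msg j H h (from_nat_into (node h ` C) v)))"
    (is "exact_code n k d A B ?N ?f ?phi")
proof -
  let ?e = "from_nat_into C"
  have e: "bij_betw ?e {..<?N} C" by (rule bij_betw_from_nat_into_finite[OF \<open>finite C\<close>])
  have eC: "?e x \<in> C" if "x < ?N" for x using e that by (auto simp: bij_betw_def)
  have count: "countable (node j ` C)" "countable (msg j H h ` node h ` C)" for j H h
    using \<open>finite C\<close> by (simp_all add: countable_finite)
  have f_eq: "?f j x = ?f j y \<longleftrightarrow> node j (?e x) = node j (?e y)" if "x < ?N" "y < ?N" for j x y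
    using count eC that by simp
  have phi_f: "?phi j H h (?f h x) = to_nat_on (msg j H h ` node h ` C) (msg j H h (node h (?e x)))"
    if "x < ?N" for j H h x
    using count eC that by simp
  have card_image_to_nat_on: "card (to_nat_on S ` g ` {..<?N}) \<le> card S" if "g ` {..<?N} \<subseteq> S" "finite S"
    for S and g :: "nat \<Rightarrow> 'u"
    by (meson that card_image_le card_mono finite_imageI image_mono order_trans)
  show ?thesis
    unfolding exact_code_def
  proof (intro conjI allI impI ballI)
    fix j assume "j < n"
    have img: "?f j ` {..<?N} = to_nat_on (node j ` C) ` (\<lambda>x. node j (?e x)) ` {..<?N}"
      by (simp add: image_image)
    have "card (?f j ` {..<?N}) \<le> card (node j ` C)"
      unfolding img using eC \<open>finite C\<close> by (intro card_image_to_nat_on) auto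
    then show "real (card (?f j ` {..<?N})) \<le> 2 powr A"
      using node_size[OF \<open>j < n\<close>] by linarith
  next
    fix K x y assume "K \<subseteq> {..<n} \<and> card K = k" "x < ?N" "y < ?N" "\<forall>m\<in>K. ?f m x = ?f m y"
    then have "?e x = ?e y" using decode eC f_eq by auto
    then show "x = y" using e \<open>x < ?N\<close> \<open>y < ?N\<close> by (auto simp: bij_betw_def inj_on_def)
  next
    fix j H h assume j: "j < n" and H: "H \<subseteq> {..<n} - {j} \<and> card H = d" and "h \<in> H"
    have img: "?phi j H h ` ?f h ` {..<?N} = to_nat_on (msg j H h ` node h ` C) ` (\<lambda>x. msg j H h (node h (?e x))) ` {..<?N}"
      unfolding image_image[of "?phi j H h"] image_image[of "to_nat_on _"]
      by (rule image_cong) (simp_all only: lessThan_iff phi_f)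
    have "card (?phi j H h ` ?f h ` {..<?N}) \<le> card (msg j H h ` node h ` C)"
      unfolding img using eC \<open>finite C\<close> by (intro card_image_to_nat_on) auto
    then show "real (card (?phi j H h ` ?f h ` {..<?N})) \<le> 2 powr B"
      using msg_size[of j H h] j H \<open>h \<in> H\<close> by linarith
  next
    fix j H x y assume j: "j < n" and H: "H \<subseteq> {..<n} - {j} \<and> card H = d"
      and xy: "x < ?N" "y < ?N" and same_msgs: "\<forall>h\<in>H. ?phi j H h (?f h x) = ?phi j H h (?f h y)"
    have "msg j H h (node h (?e x)) = msg j H h (node h (?e y))" if "h \<in> H" for h
      using same_msgs[rule_format, OF that] phi_f[OF xy(1)] phi_f[OF xy(2)] count eC[OF xy(1)] eC[OF xy(2)]
      by simp
    then have "node j (?e x) = node j (?e y)" using repair j H eC xy by blast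
    then show "?f j x = ?f j y" using f_eq[OF xy] by blast
  qed
qed

locale layered_code =
  fixes n k d i p :: nat
  assumes k_pos: "0 < k" and k_le_d: "k \<le> d" and d_less_n: "d < n"
    and i_pos: "1 \<le> i" and i_le_k: "i \<le> k"
    and prime_p: "prime p" and p_large: "n * (d - k + 1) < p"
begin

definition r :: nat where "r = n - k + i"
definition s :: nat where "s = d - k + 1"
definition width :: nat where "width = d - k + i"
definition red :: nat where "red = n - k"

text \<open>With n! copies, every possible size of R \<inter> H divides the number of copies, so the
  rotating window of selected helpers uses every helper of R \<inter> H equally often.\<close>

definition copies :: nat where "copies = fact n"
definition layers :: "nat set set" where "layers = {R. R \<subseteq> {..<n} \<and> card R = r}"
definition labels :: "nat set \<Rightarrow> (nat \<Rightarrow> nat) set" where "labels R = PiE R (\<lambda>_. {..<s})"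
definition point :: "nat \<Rightarrow> nat \<Rightarrow> int" where "point m u = int (m * s + u)"

abbreviation P :: int where "P \<equiv> int p"

text \<open>A symbol (R, m, c, a) is coordinate m of the codeword of layer R in copy (c, a);
  node m stores all symbols with second component m.\<close>

type_synonym symbol = "nat set \<times> nat \<times> nat \<times> (nat \<Rightarrow> nat)"

definition symbols :: "symbol set" where
  "symbols = Sigma layers (\<lambda>R. R \<times> ({..<copies} \<times> labels R))"
definition node_symbols :: "nat \<Rightarrow> symbol set" where
  "node_symbols j = Sigma {R\<in>layers. j \<in> R} (\<lambda>R. {j} \<times> ({..<copies} \<times> labels R))"
definition checks :: "symbol set" where
  "checks = Sigma layers (\<lambda>R. {..<red} \<times> ({..<copies} \<times> labels R))"
definition check_sum :: "(symbol \<Rightarrow> int) \<Rightarrow> symbol \<Rightarrow> int" where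
  "check_sum z = (\<lambda>(R, t, c, a). \<Sum>m\<in>R. point m (a m) ^ t * z (R, m, c, a))"
definition satisfies_checks :: "(symbol \<Rightarrow> int) \<Rightarrow> bool" where
  "satisfies_checks z \<longleftrightarrow> (\<forall>y\<in>checks. P dvd check_sum z y)"
definition words :: "(symbol \<Rightarrow> int) set" where "words = PiE symbols (\<lambda>_. {0..<P})"
definition syndromes :: "(symbol \<Rightarrow> int) set" where "syndromes = PiE checks (\<lambda>_. {0..<P})"
definition syndrome :: "(symbol \<Rightarrow> int) \<Rightarrow> symbol \<Rightarrow> int" where
  "syndrome w = (\<lambda>y\<in>checks. check_sum w y mod P)"
definition code :: "(symbol \<Rightarrow> int) set" where "code = {w\<in>words. satisfies_checks w}"

lemma red_add_i: "red + i = r"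
  and s_add_unselected: "s + (r - 1 - width) = red"
  and s_pos: "0 < s" and width_pos: "0 < width" and r_pos: "0 < r" and r_le_n: "r \<le> n"
  using k_pos k_le_d d_less_n i_pos i_le_k unfolding red_def r_def s_def width_def by auto

lemma real_s: "real s = real d - real k + 1"
  and real_width: "real width = real d - real k + real i"
  and real_r: "real r = real n - real k + real i"
  using k_le_d d_less_n i_le_k unfolding r_def s_def width_def by auto

lemma P_gt_1: "1 < P"
  using prime_p prime_gt_1_nat by simp

lemma layer_finite: "R \<in> layers \<Longrightarrow> finite R"
  unfolding layers_def by (auto intro: finite_subset)

lemma layer_card: "R \<in> layers \<Longrightarrow> card R = r"
  unfolding layers_def by blast

lemma layer_subset: "R \<in> layers \<Longrightarrow> R \<subseteq> {..<n}"
  unfolding layers_def by blast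

lemma finite_layers [simp]: "finite layers"
  unfolding layers_def by (rule finite_subset[of _ "Pow {..<n}"]) auto

lemma finite_labels [simp]: "finite R \<Longrightarrow> finite (labels R)"
  unfolding labels_def by (simp add: finite_PiE)

lemma finite_symbols [simp]: "finite symbols"
  unfolding symbols_def using layer_finite by (intro finite_SigmaI) auto

lemma finite_checks [simp]: "finite checks"
  unfolding checks_def using layer_finite by (intro finite_SigmaI) auto

lemma card_labels: "finite R \<Longrightarrow> card (labels R) = s ^ card R"
  unfolding labels_def by (simp add: card_PiE)

lemma labels_update: "a \<in> labels R \<Longrightarrow> j \<in> R \<Longrightarrow> u < s \<Longrightarrow> a(j := u) \<in> labels R"
  unfolding labels_def by (auto simp: PiE_iff extensional_def)

lemma labels_restrict: "a \<in> labels R \<Longrightarrow> a(j := undefined) \<in> labels (R - {j})"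
  unfolding labels_def by (auto simp: PiE_iff extensional_def)

lemma point_not_dvd_diff:
  assumes "m < n" "m' < n" "u < s" "u' < s" "(m, u) \<noteq> (m', u')"
  shows "\<not> P dvd point m u - point m' u'"
proof -
  have "(m * s + u) div s = m" "(m * s + u) mod s = u" "(m' * s + u') div s = m'" "(m' * s + u') mod s = u'"
    using assms by auto
  then have "m * s + u \<noteq> m' * s + u'" using assms(5) by metis
  then have "0 < \<bar>point m u - point m' u'\<bar>" unfolding point_def by linarith
  moreover have small: "x * s + v < p" if "x < n" "v < s" for x v
  proof -
    have "x * s + v < (x + 1) * s" using that by simp
    also have "\<dots> \<le> n * s" using that by (intro mult_right_mono) auto
    finally show ?thesis using p_large unfolding s_def by linarith
  qed
  then have "int (m * s + u) < P" "int (m' * s + u') < P"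
    using small[of m u] small[of m' u'] assms by (simp_all only: of_nat_less_iff)
  then have "\<bar>point m u - point m' u'\<bar> < P" unfolding point_def by linarith
  ultimately show ?thesis using zdvd_imp_le dvd_abs_iff by (metis linorder_not_le)
qed

lemma check_sum_diff: "check_sum (\<lambda>x. w x - w' x) y = check_sum w y - check_sum w' y"
  unfolding check_sum_def by (simp add: case_prod_beta right_diff_distrib sum_subtractf)

lemma satisfies_checks_diff:
  "satisfies_checks w \<Longrightarrow> satisfies_checks w' \<Longrightarrow> satisfies_checks (\<lambda>x. w x - w' x)"
  unfolding satisfies_checks_def check_sum_diff by auto

lemma symbol_in_node: "(R, m, c, a) \<in> symbols \<Longrightarrow> (R, m, c, a) \<in> node_symbols m"
  unfolding symbols_def node_symbols_def by auto

lemma erasure_decoding: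
  assumes z: "satisfies_checks z" and K: "K \<subseteq> {..<n}" "card K = k"
    and erased: "\<And>m x. m \<in> K \<Longrightarrow> x \<in> node_symbols m \<Longrightarrow> z x = 0"
    and x: "x \<in> symbols"
  shows "P dvd z x"
proof -
  obtain R m c a where x_eq: "x = (R, m, c, a)" and R: "R \<in> layers" and m: "m \<in> R"
    and c: "c < copies" and a: "a \<in> labels R"
    using x unfolding symbols_def by auto
  show ?thesis
  proof (cases "m \<in> K")
    case True
    then show ?thesis using erased x symbol_in_node unfolding x_eq by simp
  next
    case False
    have "card (R - K) \<le> card ({..<n} - K)" using layer_subset[OF R] by (intro card_mono) auto
    also have "\<dots> = red" using K unfolding red_def by (simp add: card_Diff_subset finite_subset)
    finally have card_unknowns: "card (R - K) \<le> red" .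
    show ?thesis unfolding x_eq
    proof (rule prime_dvd_vandermonde_combination[where I = "R - K" and T = red
          and g = "\<lambda>m. point m (a m)" and z = "\<lambda>m. z (R, m, c, a)"])
      show "prime P" using prime_p by simp
      show "finite (R - K)" using layer_finite[OF R] by simp
      show "m \<in> R - K" using m False by simp
      show "\<not> P dvd point m' (a m') - point m'' (a m'')"
        if "m' \<in> R - K" "m'' \<in> R - K" "m' \<noteq> m''" for m' m''
        using that layer_subset[OF R] a unfolding labels_def by (intro point_not_dvd_diff) auto
    next
      fix t assume "t < red"
      then have "P dvd check_sum z (R, t, c, a)"
        using z R c a unfolding satisfies_checks_def checks_def by auto
      also have "check_sum z (R, t, c, a) = (\<Sum>m\<in>R - K. point m (a m) ^ t * z (R, m, c, a))"
        unfolding check_sum_def using layer_finite[OF R] R c a erased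
        by (auto intro!: sum.mono_neutral_right simp: symbols_def symbol_in_node)
      finally show "P dvd (\<Sum>m\<in>R - K. point m (a m) ^ t * z (R, m, c, a))" .
    qed (use card_unknowns in auto)
  qed
qed

definition selected :: "nat set \<Rightarrow> nat set \<Rightarrow> nat \<Rightarrow> nat set" where
  "selected H R c = {h\<in>R \<inter> H. (to_nat_on (R \<inter> H) h + c) mod card (R \<inter> H) < width}"

lemma width_le_card_helpers:
  assumes j: "j < n" and H: "H \<subseteq> {..<n} - {j}" "card H = d" and R: "R \<in> layers" "j \<in> R"
  shows "width \<le> card (R \<inter> H)"
proof -
  have "R - {j} \<subseteq> (R \<inter> H) \<union> (({..<n} - {j}) - H)" using layer_subset[OF R(1)] by auto
  then have "card (R - {j}) \<le> card ((R \<inter> H) \<union> (({..<n} - {j}) - H))"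
    using layer_finite[OF R(1)] by (intro card_mono) auto
  also have "\<dots> \<le> card (R \<inter> H) + card (({..<n} - {j}) - H)" by (rule card_Un_le)
  also have "card (({..<n} - {j}) - H) = (n - 1) - d"
    using H j by (subst card_Diff_subset) (auto simp: finite_subset)
  finally have "r - 1 \<le> card (R \<inter> H) + (n - 1 - d)"
    using layer_card[OF R(1)] R(2) layer_finite[OF R(1)] by simp
  then show ?thesis using k_pos k_le_d d_less_n i_pos i_le_k unfolding r_def width_def by linarith
qed

lemma card_selected:
  assumes "j < n" "H \<subseteq> {..<n} - {j}" "card H = d" "R \<in> layers" "j \<in> R"
  shows "card (selected H R c) = width"
  unfolding selected_def
  using card_enumerated_window[of "R \<inter> H" width c] width_le_card_helpers[OF assms] layer_finite[OF assms(4)]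
  by simp

lemma card_unselected:
  assumes "j < n" "H \<subseteq> {..<n} - {j}" "card H = d" "R \<in> layers" "j \<in> R"
  shows "card (R - {j} - selected H R c) = r - 1 - width"
proof -
  have "selected H R c \<subseteq> R - {j}" unfolding selected_def using assms(2) by auto
  then show ?thesis
    using card_selected[OF assms] layer_card[OF assms(4)] layer_finite[OF assms(4)] assms(5)
    by (simp add: card_Diff_subset finite_subset)
qed

text \<open>Summing the checks of the s codewords that differ only in the label of j, every
  other node m enters only through the sum of its symbols over that label.\<close>

lemma summed_check_dvd:
  assumes z: "satisfies_checks z" and R: "R \<in> layers" "j \<in> R" and c: "c < copies"
    and a: "a \<in> labels R" and t: "t < red"
  shows "P dvd (\<Sum>u<s. point j u ^ t * z (R, j, c, a(j := u)))
               + (\<Sum>m\<in>R - {j}. point m (a m) ^ t * (\<Sum>u<s. z (R, m, c, a(j := u))))"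
proof -
  have "P dvd (\<Sum>u<s. check_sum z (R, t, c, a(j := u)))"
    using z R c t labels_update[OF a R(2)] unfolding satisfies_checks_def checks_def
    by (intro dvd_sum) auto
  also have "(\<Sum>u<s. check_sum z (R, t, c, a(j := u)))
      = (\<Sum>m\<in>R. \<Sum>u<s. point m ((a(j := u)) m) ^ t * z (R, m, c, a(j := u)))"
    unfolding check_sum_def by (simp add: sum.swap[of _ R])
  also have "\<dots> = (\<Sum>u<s. point j u ^ t * z (R, j, c, a(j := u)))
      + (\<Sum>m\<in>R - {j}. point m (a m) ^ t * (\<Sum>u<s. z (R, m, c, a(j := u))))"
    using layer_finite[OF R(1)] R(2) by (simp add: sum.remove sum_distrib_left)
  finally show ?thesis .
qed

lemma unselected_check_dvd:
  assumes z: "satisfies_checks z" and R: "R \<in> layers" "j \<in> R" and c: "c < copies"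
    and a: "a \<in> labels R" and t: "t < red" and S: "S \<subseteq> R - {j}"
    and known: "\<And>h. h \<in> S \<Longrightarrow> P dvd (\<Sum>u<s. z (R, h, c, a(j := u)))"
  shows "P dvd (\<Sum>u<s. point j u ^ t * z (R, j, c, a(j := u)))
               + (\<Sum>m\<in>R - {j} - S. point m (a m) ^ t * (\<Sum>u<s. z (R, m, c, a(j := u))))"
proof -
  define helper_sum where "helper_sum m = (\<Sum>u<s. z (R, m, c, a(j := u)))" for m
  let ?own = "\<Sum>u<s. point j u ^ t * z (R, j, c, a(j := u))"
  let ?known = "\<Sum>m\<in>S. point m (a m) ^ t * helper_sum m"
  let ?rest = "\<Sum>m\<in>R - {j} - S. point m (a m) ^ t * helper_sum m"
  have "(\<Sum>m\<in>R - {j}. point m (a m) ^ t * helper_sum m) = ?known + ?rest"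
    using layer_finite[OF R(1)] S by (subst sum.subset_diff[of S "R - {j}"]) auto
  then have "P dvd ?own + (?known + ?rest)"
    using summed_check_dvd[OF z R c a t] unfolding helper_sum_def by simp
  moreover have "P dvd ?known"
    by (intro dvd_sum dvd_mult) (simp add: helper_sum_def known)
  ultimately have "P dvd (?own + (?known + ?rest)) - ?known" by (rule dvd_diff)
  then show ?thesis unfolding helper_sum_def by (simp add: algebra_simps)
qed

lemma repair_symbol:
  assumes z: "satisfies_checks z" and j: "j < n" and H: "H \<subseteq> {..<n} - {j}" "card H = d"
    and R: "R \<in> layers" "j \<in> R" and c: "c < copies" and a: "a \<in> labels R"
    and helped: "\<And>h. h \<in> selected H R c \<Longrightarrow> P dvd (\<Sum>u<s. z (R, h, c, a(j := u)))"
  shows "P dvd z (R, j, c, a)"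
proof -
  define S where "S = selected H R c"
  have finite_R: "finite R" by (rule layer_finite[OF R(1)])
  have S_sub: "S \<subseteq> R - {j}" unfolding S_def selected_def using H by auto
  \<comment> \<open>the unknowns: the symbols of node j under all s labels, and the label sums of the unselected nodes\<close>
  define I where "I = Pair j ` {..<s} \<union> (\<lambda>m. (m, a m)) ` (R - {j} - S)"
  define val where "val = (\<lambda>(m, u). if m = j then z (R, j, c, a(j := u)) else (\<Sum>u<s. z (R, m, c, a(j := u))))"
  have "card I = card (Pair j ` {..<s}) + card ((\<lambda>m. (m, a m)) ` (R - {j} - S))"
    unfolding I_def using finite_R by (intro card_Un_disjoint) auto
  also have "\<dots> = s + (r - 1 - width)"
    using card_unselected[OF j H R] unfolding S_def by (simp add: card_image inj_on_def)
  finally have card_I: "card I = red" using s_add_unselected by simp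
  have I_range: "fst v < n \<and> snd v < s" if "v \<in> I" for v
    using that layer_subset[OF R(1)] a j unfolding I_def labels_def by auto
  have "P dvd val (j, a j)"
  proof (rule prime_dvd_vandermonde_combination[where I = I and T = red and g = "\<lambda>(m, u). point m u"])
    show "prime P" using prime_p by simp
    show "finite I" unfolding I_def using finite_R by simp
    show "(j, a j) \<in> I" unfolding I_def using a R(2) unfolding labels_def by auto
    show "\<not> P dvd (case v of (m, u) \<Rightarrow> point m u) - (case v' of (m, u) \<Rightarrow> point m u)"
      if "v \<in> I" "v' \<in> I" "v \<noteq> v'" for v v'
      using that I_range[OF that(1)] I_range[OF that(2)] point_not_dvd_diff
      by (cases v, cases v') auto
  next
    fix t assume "t < red"
    then have "P dvd (\<Sum>u<s. point j u ^ t * z (R, j, c, a(j := u)))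
        + (\<Sum>m\<in>R - {j} - S. point m (a m) ^ t * (\<Sum>u<s. z (R, m, c, a(j := u))))"
      using S_sub helped unfolding S_def by (intro unselected_check_dvd[OF z R c a]) auto
    also have "\<dots> = (\<Sum>v\<in>I. (case v of (m, u) \<Rightarrow> point m u) ^ t * val v)"
      unfolding I_def using finite_R
      by (subst sum.union_disjoint) (auto simp: sum.reindex inj_on_def val_def)
    finally show "P dvd (\<Sum>v\<in>I. (case v of (m, u) \<Rightarrow> point m u) ^ t * val v)" .
  qed (use card_I in simp)
  then show ?thesis unfolding val_def by simp
qed

definition node_layers :: nat where "node_layers = card {R\<in>layers. 0 \<in> R}"
definition block :: nat where "block = copies * s ^ r"

lemma transpose_layer:
  assumes "a < n" "b < n" "R \<in> layers"
  shows "transpose a b ` R \<in> layers"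
proof -
  have "transpose a b ` R \<subseteq> {..<n}"
    using assms layer_subset unfolding transpose_def by fastforce
  moreover have "card (transpose a b ` R) = card R" by (simp add: card_image)
  ultimately show ?thesis using assms(3) unfolding layers_def by simp
qed

lemma card_layers_containing: "j < n \<Longrightarrow> card {R\<in>layers. j \<in> R} = node_layers"
  using sum_members_transpose[of layers j 0 "\<lambda>_. 1::nat"] transpose_layer d_less_n
  unfolding node_layers_def by simp

lemma card_layers_mult: "card layers * r = n * node_layers"
proof -
  have "n * node_layers = (\<Sum>j\<in>{..<n}. card {R\<in>layers. j \<in> R})"
    using card_layers_containing by simp
  also have "\<dots> = (\<Sum>R\<in>layers. card (R \<inter> {..<n}))"
    using sum_members_eq_sum_card_Int[of "{..<n}" layers "\<lambda>_. 1::nat"] by simp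
  also have "\<dots> = card layers * r"
    using layer_subset layer_card by (simp add: Int_absorb2)
  finally show ?thesis by simp
qed

lemma node_layers_pos: "0 < node_layers"
proof -
  have "{..<r} \<in> {R\<in>layers. 0 \<in> R}" using r_pos r_le_n unfolding layers_def by auto
  then show ?thesis unfolding node_layers_def by (auto simp: card_gt_0_iff intro: finite_subset)
qed

lemma card_Sigma_layers:
  assumes "\<And>R. R \<in> L \<Longrightarrow> finite (B R) \<and> card (B R) = b" "L \<subseteq> layers"
  shows "card (Sigma L (\<lambda>R. B R \<times> ({..<copies} \<times> labels R))) = card L * (b * block)"
proof -
  have "card (B R \<times> ({..<copies} \<times> labels R)) = b * block" if "R \<in> L" for R
    using assms that layer_finite layer_card
    by (auto simp: card_cartesian_product card_labels block_def)
  then have "card (Sigma L (\<lambda>R. B R \<times> ({..<copies} \<times> labels R))) = (\<Sum>R\<in>L. b * block)"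
    using assms layer_finite finite_subset[OF assms(2)] by (subst card_SigmaI) auto
  then show ?thesis by simp
qed

lemma card_symbols: "card symbols = card layers * (r * block)"
  unfolding symbols_def by (rule card_Sigma_layers) (auto simp: layer_finite layer_card)

lemma card_checks: "card checks = card layers * (red * block)"
  unfolding checks_def by (rule card_Sigma_layers) auto

lemma card_node_symbols: "j < n \<Longrightarrow> card (node_symbols j) = node_layers * block"
  unfolding node_symbols_def using card_layers_containing
  by (subst card_Sigma_layers[where b = 1]) auto

lemma check_sum_mod_cong:
  assumes "y \<in> checks" "\<And>x. x \<in> symbols \<Longrightarrow> [w x = w' x] (mod P)"
  shows "[check_sum w y = check_sum w' y] (mod P)"
proof -
  obtain R t c a where "y = (R, t, c, a)" "R \<in> layers" "c < copies" "a \<in> labels R"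
    using assms(1) unfolding checks_def by auto
  then show ?thesis
    unfolding check_sum_def using assms(2)
    by (auto intro!: cong_sum cong_scalar_left simp: symbols_def)
qed

lemma finite_words: "finite words"
  unfolding words_def by (simp add: finite_PiE)

lemma translate_in_code:
  assumes w: "syndrome w = syndrome w0"
  shows "(\<lambda>x\<in>symbols. (w x - w0 x) mod P) \<in> code"
proof -
  let ?g = "\<lambda>x\<in>symbols. (w x - w0 x) mod P"
  have "?g \<in> words" unfolding words_def using P_gt_1 by auto
  moreover have "P dvd check_sum ?g y" if y: "y \<in> checks" for y
  proof -
    have "syndrome w y = syndrome w0 y" using w by simp
    then have "check_sum w y mod P = check_sum w0 y mod P"
      using y unfolding syndrome_def by simp
    then have "[check_sum (\<lambda>x. w x - w0 x) y = 0] (mod P)"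
      unfolding check_sum_diff cong_0_iff by (simp only: mod_eq_dvd_iff)
    moreover have "[check_sum ?g y = check_sum (\<lambda>x. w x - w0 x) y] (mod P)"
      using y by (intro check_sum_mod_cong) (simp_all add: cong_def)
    ultimately show ?thesis using cong_trans cong_0_iff by blast
  qed
  ultimately show ?thesis unfolding code_def satisfies_checks_def by blast
qed

lemma card_syndrome_fibre_le: "card {w\<in>words. syndrome w = syndrome w0} \<le> card code"
proof (rule card_inj_on_le)
  let ?g = "\<lambda>w. \<lambda>x\<in>symbols. (w x - w0 x) mod P"
  show "inj_on ?g {w\<in>words. syndrome w = syndrome w0}"
  proof (rule inj_onI)
    fix w w' assume w: "w \<in> {w\<in>words. syndrome w = syndrome w0}" "w' \<in> {w\<in>words. syndrome w = syndrome w0}"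
      and "?g w = ?g w'"
    show "w = w'"
    proof (rule PiE_ext)
      show "w \<in> PiE symbols (\<lambda>_. {0..<P})" "w' \<in> PiE symbols (\<lambda>_. {0..<P})"
        using w unfolding words_def by auto
      fix x assume x: "x \<in> symbols"
      have "?g w x = ?g w' x" using \<open>?g w = ?g w'\<close> by simp
      then have "(w x - w0 x) mod P = (w' x - w0 x) mod P" using x by simp
      then have "P dvd (w x - w0 x) - (w' x - w0 x)" by (simp only: mod_eq_dvd_iff)
      then have "P dvd w x - w' x" by simp
      then show "w x = w' x" using w x unfolding words_def by (intro eq_of_dvd_diff) auto
    qed
  qed
  show "?g ` {w\<in>words. syndrome w = syndrome w0} \<subseteq> code" using translate_in_code by blast
  show "finite code" using finite_words unfolding code_def by simp
qed

lemma card_words_le: "card words \<le> card code * card syndromes"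
proof -
  have "words = (\<Union>v\<in>syndrome ` words. {w\<in>words. syndrome w = v})" by blast
  then have "card words \<le> (\<Sum>v\<in>syndrome ` words. card {w\<in>words. syndrome w = v})"
    using card_UN_le[of "syndrome ` words" "\<lambda>v. {w\<in>words. syndrome w = v}"] finite_words by simp
  also have "\<dots> \<le> (\<Sum>v\<in>syndrome ` words. card code)" using card_syndrome_fibre_le by (intro sum_mono) auto
  also have "\<dots> = card (syndrome ` words) * card code" by simp
  also have "\<dots> \<le> card syndromes * card code"
  proof -
    have "syndrome ` words \<subseteq> syndromes"
      unfolding syndrome_def syndromes_def using P_gt_1 by (auto simp: PiE_iff)
    moreover have "finite syndromes" unfolding syndromes_def by (simp add: finite_PiE)
    ultimately show ?thesis by (intro mult_right_mono card_mono) auto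
  qed
  finally show ?thesis by (simp add: mult.commute)
qed

lemma card_code_ge: "p ^ (card layers * i * block) \<le> card code"
proof -
  have "card symbols = card checks + card layers * i * block"
    unfolding card_symbols card_checks red_add_i[symmetric] by (simp add: algebra_simps)
  moreover have "card words = p ^ card symbols" "card syndromes = p ^ card checks"
    unfolding words_def syndromes_def by (simp_all add: card_PiE)
  ultimately have "p ^ card checks * p ^ (card layers * i * block) \<le> p ^ card checks * card code"
    using card_words_le by (simp add: power_add mult.commute)
  then show ?thesis using prime_gt_0_nat[OF prime_p] by simp
qed

definition repair_index :: "nat \<Rightarrow> nat set \<Rightarrow> nat \<Rightarrow> (nat set \<times> nat \<times> (nat \<Rightarrow> nat)) set" where
  "repair_index j H h =
     Sigma {R\<in>layers. j \<in> R \<and> h \<in> R} (\<lambda>R. {c\<in>{..<copies}. h \<in> selected H R c} \<times> labels (R - {j}))"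

lemma card_selecting_copies:
  assumes "j < n" "H \<subseteq> {..<n} - {j}" "card H = d" "R \<in> layers" "j \<in> R" "h \<in> R \<inter> H"
  shows "real (card {c\<in>{..<copies}. h \<in> selected H R c}) = real copies * real width / real (card (R \<inter> H))"
proof -
  define x where "x = card (R \<inter> H)"
  have "width \<le> x" unfolding x_def by (rule width_le_card_helpers[OF assms(1-5)])
  moreover have "x \<le> n" unfolding x_def using layer_subset[OF assms(4)] by (intro card_mono[of "{..<n}", simplified]) auto
  ultimately have "0 < x" "x dvd copies" using width_pos unfolding copies_def by (auto simp: dvd_fact)
  then obtain q where q: "copies = x * q" by blast
  have "{c\<in>{..<copies}. h \<in> selected H R c} = {c\<in>{..<x * q}. (to_nat_on (R \<inter> H) h + c) mod x < width}"
    using assms(6) unfolding selected_def x_def q by auto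
  then have "card {c\<in>{..<copies}. h \<in> selected H R c} = q * width"
    using card_rotated_window_periods[OF \<open>0 < x\<close> \<open>width \<le> x\<close>] by simp
  then show ?thesis unfolding x_def[symmetric] using q \<open>0 < x\<close> by (simp add: field_simps)
qed

definition repair_weight :: "nat \<Rightarrow> nat set \<Rightarrow> nat set \<Rightarrow> real" where
  "repair_weight j H R = (if j \<in> R then 1 / real (card (R \<inter> H)) else 0)"

lemma card_repair_index_weights:
  assumes "j < n" "H \<subseteq> {..<n} - {j}" "card H = d" "h \<in> H"
  shows "real (card (repair_index j H h))
           = real copies * real width * real s ^ (r - 1) * (\<Sum>R\<in>{R\<in>layers. h \<in> R}. repair_weight j H R)"
proof -
  have "real (card (repair_index j H h))
      = (\<Sum>R\<in>{R\<in>layers. j \<in> R \<and> h \<in> R}. real (card {c\<in>{..<copies}. h \<in> selected H R c}) * real s ^ (r - 1))"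
    unfolding repair_index_def using layer_finite layer_card
    by (subst card_SigmaI) (auto simp: card_cartesian_product card_labels)
  also have "\<dots> = (\<Sum>R\<in>{R\<in>layers. j \<in> R \<and> h \<in> R}.
      real copies * real width * real s ^ (r - 1) * (1 / real (card (R \<inter> H))))"
    using card_selecting_copies[OF assms(1-3)] assms(4) by (intro sum.cong refl) auto
  also have "\<dots> = real copies * real width * real s ^ (r - 1) * (\<Sum>R\<in>{R\<in>layers. h \<in> R}. repair_weight j H R)"
    unfolding repair_weight_def sum_distrib_left[symmetric]
    by (intro arg_cong[where f = "(*) _"] sum.mono_neutral_cong_left) auto
  finally show ?thesis .
qed

lemma repair_weight_sum_transpose:
  assumes "j < n" "H \<subseteq> {..<n} - {j}" "h \<in> H" "h' \<in> H"
  shows "(\<Sum>R\<in>{R\<in>layers. h \<in> R}. repair_weight j H R) = (\<Sum>R\<in>{R\<in>layers. h' \<in> R}. repair_weight j H R)"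
proof (rule sum_members_transpose)
  fix R assume R: "R \<in> layers"
  show "transpose h h' ` R \<in> layers" using assms R by (intro transpose_layer) auto
  have "j \<noteq> h" "j \<noteq> h'" using assms by auto
  then have "transpose h h' ` H = H" "transpose h h' j = j" using assms by auto
  then have "transpose h h' ` R \<inter> H = transpose h h' ` (R \<inter> H)" "j \<in> transpose h h' ` R \<longleftrightarrow> j \<in> R"
    by (metis image_Int inj_transpose, metis image_iff transpose_involutory)
  then show "repair_weight j H (transpose h h' ` R) = repair_weight j H R"
    unfolding repair_weight_def by (simp add: card_image)
qed

lemma repair_weight_sum:
  assumes j: "j < n" and H: "H \<subseteq> {..<n} - {j}" "card H = d" and h: "h \<in> H"
  shows "real d * (\<Sum>R\<in>{R\<in>layers. h \<in> R}. repair_weight j H R) = real node_layers"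
proof -
  have finite_H: "finite H" using H by (auto intro: finite_subset)
  have "real d * (\<Sum>R\<in>{R\<in>layers. h \<in> R}. repair_weight j H R)
      = (\<Sum>h'\<in>H. \<Sum>R\<in>{R\<in>layers. h' \<in> R}. repair_weight j H R)"
    using repair_weight_sum_transpose[OF j H(1) _ h] H(2) by simp
  also have "\<dots> = (\<Sum>R\<in>layers. real (card (R \<inter> H)) * repair_weight j H R)"
    by (rule sum_members_eq_sum_card_Int[OF finite_H]) simp
  also have "\<dots> = (\<Sum>R\<in>layers. if j \<in> R then 1 else 0)"
  proof (intro sum.cong refl)
    fix R assume R: "R \<in> layers"
    show "real (card (R \<inter> H)) * repair_weight j H R = (if j \<in> R then 1 else 0)"
      using width_le_card_helpers[OF j H R] width_pos unfolding repair_weight_def by auto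
  qed
  also have "\<dots> = real node_layers"
    using card_layers_containing[OF j] by (simp add: sum.If_cases Int_def)
  finally show ?thesis .
qed

lemma card_repair_index:
  assumes "j < n" "H \<subseteq> {..<n} - {j}" "card H = d" "h \<in> H"
  shows "real (card (repair_index j H h)) = real (node_layers * block) * real width / (real s * real d)"
proof -
  have "real s ^ (r - 1) * real s = real s ^ r" using r_pos
    by (metis Suc_diff_1 less_le_trans power_Suc2 zero_less_one)
  moreover have "0 < real d" "0 < real s" using s_pos k_pos k_le_d by auto
  ultimately have "real (card (repair_index j H h)) * (real s * real d)
      = real copies * real width * real s ^ r * (real d * (\<Sum>R\<in>{R\<in>layers. h \<in> R}. repair_weight j H R))"
    unfolding card_repair_index_weights[OF assms] by (simp add: field_simps)
  also have "\<dots> = real (node_layers * block) * real width"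
    unfolding repair_weight_sum[OF assms] block_def by simp
  finally show ?thesis using \<open>0 < real d\<close> \<open>0 < real s\<close> by (simp add: field_simps)
qed

definition repair_msg ::
  "nat \<Rightarrow> nat set \<Rightarrow> nat \<Rightarrow> (symbol \<Rightarrow> int) \<Rightarrow> nat set \<times> nat \<times> (nat \<Rightarrow> nat) \<Rightarrow> int" where
  "repair_msg j H h v = (\<lambda>(R, c, a)\<in>repair_index j H h. (\<Sum>u<s. v (R, h, c, a(j := u))) mod P)"

lemma code_in_words: "w \<in> code \<Longrightarrow> x \<in> symbols \<Longrightarrow> w x \<in> {0..<P}"
  unfolding code_def words_def by auto

lemma node_symbols_subset: "node_symbols j \<subseteq> symbols"
  unfolding node_symbols_def symbols_def by auto

lemma code_decoding:
  assumes w: "w \<in> code" "w' \<in> code" and K: "K \<subseteq> {..<n}" "card K = k"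
    and same: "\<forall>m\<in>K. restrict w (node_symbols m) = restrict w' (node_symbols m)"
  shows "w = w'"
proof (rule PiE_ext)
  show "w \<in> PiE symbols (\<lambda>_. {0..<P})" "w' \<in> PiE symbols (\<lambda>_. {0..<P})"
    using w unfolding code_def words_def by auto
  fix x assume x: "x \<in> symbols"
  have z: "satisfies_checks (\<lambda>x. w x - w' x)"
    using w unfolding code_def by (intro satisfies_checks_diff) auto
  have "w y - w' y = 0" if "m \<in> K" "y \<in> node_symbols m" for m y
    using same that by (metis restrict_apply' diff_self)
  then have "P dvd w x - w' x" by (rule erasure_decoding[OF z K _ x])
  then show "w x = w' x" using x w code_in_words by (intro eq_of_dvd_diff) auto
qed

lemma code_repair:
  assumes w: "w \<in> code" "w' \<in> code" and j: "j < n" and H: "H \<subseteq> {..<n} - {j}" "card H = d"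
    and same: "\<forall>h\<in>H. repair_msg j H h (restrict w (node_symbols h)) = repair_msg j H h (restrict w' (node_symbols h))"
  shows "restrict w (node_symbols j) = restrict w' (node_symbols j)"
proof (rule restrict_ext)
  fix x assume "x \<in> node_symbols j"
  then obtain R c a where x: "x = (R, j, c, a)" and R: "R \<in> layers" "j \<in> R" and c: "c < copies"
    and a: "a \<in> labels R"
    unfolding node_symbols_def by auto
  have z: "satisfies_checks (\<lambda>x. w x - w' x)"
    using w unfolding code_def by (intro satisfies_checks_diff) auto
  have "P dvd (\<Sum>u<s. w (R, h, c, a(j := u)) - w' (R, h, c, a(j := u)))" if h: "h \<in> selected H R c" for h
  proof -
    have "h \<in> H" "h \<in> R" using h unfolding selected_def by auto
    then have index: "(R, c, a(j := undefined)) \<in> repair_index j H h"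
      unfolding repair_index_def using R c h labels_restrict[OF a] by auto
    have in_node: "(R, h, c, a(j := u)) \<in> node_symbols h" if "u < s" for u
      using R c \<open>h \<in> R\<close> labels_update[OF a R(2) that] unfolding node_symbols_def by auto
    have "repair_msg j H h (restrict w (node_symbols h)) (R, c, a(j := undefined))
        = repair_msg j H h (restrict w' (node_symbols h)) (R, c, a(j := undefined))"
      using same \<open>h \<in> H\<close> by simp
    then have "(\<Sum>u<s. w (R, h, c, a(j := u))) mod P = (\<Sum>u<s. w' (R, h, c, a(j := u))) mod P"
      using index in_node unfolding repair_msg_def by simp
    then show ?thesis by (simp add: sum_subtractf mod_eq_dvd_iff)
  qed
  then have "P dvd w x - w' x"
    unfolding x using repair_symbol[OF z j H R c a] by simp
  moreover have "x \<in> symbols" using \<open>x \<in> node_symbols j\<close> node_symbols_subset by blast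
  ultimately show "w x = w' x" using w code_in_words by (intro eq_of_dvd_diff) auto
qed

lemma finite_repair_index: "finite (repair_index j H h)"
  unfolding repair_index_def using layer_finite by (intro finite_SigmaI) auto

lemma card_le_powr_of_subset_PiE:
  assumes "V \<subseteq> PiE D (\<lambda>_. {0..<P})" "finite D"
  shows "real (card V) \<le> 2 powr (real (card D) * log 2 p)"
proof -
  have "card V \<le> p ^ card D"
    using card_mono[OF _ assms(1)] assms(2) by (simp add: card_PiE finite_PiE)
  then have "real (card V) \<le> real (p ^ card D)" by (simp only: of_nat_le_iff)
  also have "\<dots> = real p ^ card D" by simp
  also have "\<dots> = (2 powr log 2 (real p)) powr real (card D)"
    using prime_gt_0_nat[OF prime_p] by (simp add: powr_realpow)
  also have "\<dots> = 2 powr (real (card D) * log 2 p)" by (simp add: powr_powr mult.commute)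
  finally show ?thesis .
qed

lemma card_node_image:
  assumes "j < n"
  shows "real (card ((\<lambda>w. restrict w (node_symbols j)) ` code))
           \<le> 2 powr (real (node_layers * block) * log 2 p)"
proof -
  have "(\<lambda>w. restrict w (node_symbols j)) ` code \<subseteq> PiE (node_symbols j) (\<lambda>_. {0..<P})"
  proof
    fix v assume "v \<in> (\<lambda>w. restrict w (node_symbols j)) ` code"
    then obtain w where "w \<in> code" "v = restrict w (node_symbols j)" by blast
    then show "v \<in> PiE (node_symbols j) (\<lambda>_. {0..<P})"
      using code_in_words[of w] node_symbols_subset[of j] by auto
  qed
  then have "real (card ((\<lambda>w. restrict w (node_symbols j)) ` code))
      \<le> 2 powr (real (card (node_symbols j)) * log 2 p)"
    by (rule card_le_powr_of_subset_PiE) (rule finite_subset[OF node_symbols_subset finite_symbols])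
  then show ?thesis unfolding card_node_symbols[OF assms] .
qed

lemma card_repair_msg_image:
  assumes "j < n" "H \<subseteq> {..<n} - {j}" "card H = d" "h \<in> H"
  shows "real (card (repair_msg j H h ` V))
           \<le> 2 powr (real (node_layers * block) * log 2 p * real width / (real s * real d))"
proof -
  have "repair_msg j H h ` V \<subseteq> PiE (repair_index j H h) (\<lambda>_. {0..<P})"
    unfolding repair_msg_def using P_gt_1 by auto
  then have "real (card (repair_msg j H h ` V)) \<le> 2 powr (real (card (repair_index j H h)) * log 2 p)"
    using finite_repair_index by (rule card_le_powr_of_subset_PiE)
  also have "real (card (repair_index j H h)) * log 2 p
      = real (node_layers * block) * log 2 p * real width / (real s * real d)"
    by (simp add: card_repair_index[OF assms] mult_ac)
  finally show ?thesis .
qed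

lemma log_card_code_ge:
  "real n * real i / real r * (real (node_layers * block) * log 2 p) \<le> log 2 (real (card code))"
proof -
  have "real n * real i / real r * (real (node_layers * block) * log 2 p)
      = real (card layers * i * block) * log 2 p"
    using card_layers_mult r_pos by (simp add: field_simps flip: of_nat_mult)
  also have "\<dots> = log 2 (real (p ^ (card layers * i * block)))"
    using prime_gt_0_nat[OF prime_p] by (simp add: log_nat_power)
  also have "\<dots> \<le> log 2 (real (card code))"
    using card_code_ge prime_gt_0_nat[OF prime_p] by (intro log_mono) (simp_all only: of_nat_le_iff, auto)
  finally show ?thesis .
qed

lemma layered_code_exists:
  "\<exists>N f phi. 1 \<le> N
     \<and> real n * real i / real r * (real (node_layers * block) * log 2 p) \<le> log 2 (real N)
     \<and> exact_code n k d (real (node_layers * block) * log 2 p)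
         (real (node_layers * block) * log 2 p * real width / (real s * real d)) N f phi"
proof -
  let ?node = "\<lambda>j w. restrict w (node_symbols j)"
  have "1 \<le> p ^ (card layers * i * block)" using prime_gt_0_nat[OF prime_p] by simp
  then have nonempty: "1 \<le> card code" using card_code_ge by linarith
  have "exact_code n k d (real (node_layers * block) * log 2 p)
      (real (node_layers * block) * log 2 p * real width / (real s * real d)) (card code)
      (\<lambda>j x. to_nat_on (?node j ` code) (?node j (from_nat_into code x)))
      (\<lambda>j H h v. to_nat_on (repair_msg j H h ` ?node h ` code) (repair_msg j H h (from_nat_into (?node h ` code) v)))"
  proof (rule exact_code_of_set_code[where node = ?node and msg = repair_msg])
    show "finite code" using finite_words unfolding code_def by simp
    show "x = y" if "K \<subseteq> {..<n}" "card K = k" "x \<in> code" "y \<in> code" "\<forall>m\<in>K. ?node m x = ?node m y"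
      for K x y
      using code_decoding that by blast
    show "?node j x = ?node j y"
      if "j < n" "H \<subseteq> {..<n} - {j}" "card H = d" "x \<in> code" "y \<in> code"
        "\<forall>h\<in>H. repair_msg j H h (?node h x) = repair_msg j H h (?node h y)" for j H x y
      using code_repair that by blast
  qed (rule card_node_image card_repair_msg_image; assumption)+
  then show ?thesis using nonempty log_card_code_ge by blast
qed

end

theorem theorem3p2:
  fixes n k d i :: nat and alpha :: real
  assumes "0 < k" "k \<le> d" "d < n" "0 < alpha" "1 \<le> i" "i \<le> k"
  shows "C_exact n k d alpha ((real d - real k + real i) * alpha / (real d - real k + 1))
           \<ge> real n * real i * alpha / (real n - real k + real i)"
proof -
  obtain p where p: "prime p" "n * (d - k + 1) < p" using bigger_prime by blast
  interpret layered_code n k d i p using assms p by unfold_locales auto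
  define A where "A = real (node_layers * block) * log 2 p"
  obtain N f phi where N: "1 \<le> N" "real n * real i / real r * A \<le> log 2 (real N)"
    "exact_code n k d A (A * real width / (real s * real d)) N f phi"
    using layered_code_exists unfolding A_def by blast
  have "0 < A"
    unfolding A_def block_def copies_def using node_layers_pos prime_gt_1_nat[OF p(1)] s_pos
    by (simp add: fact_gt_zero)
  let ?gamma = "(real d - real k + real i) * alpha / (real d - real k + 1)"
  have "A * ?gamma / (alpha * real d) = A * real width / (real s * real d)"
    using assms unfolding real_s[symmetric] real_width[symmetric] by (simp add: field_simps)
  then have "alpha * log 2 (real N) / A \<le> C_exact n k d alpha ?gamma"
    using C_exact_ge_of_code[of k n alpha ?gamma A N] N assms \<open>0 < A\<close> by simp
  moreover have "real n * real i * alpha / (real n - real k + real i) \<le> alpha * log 2 (real N) / A"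
    using N(2) \<open>0 < A\<close> assms r_pos unfolding real_r[symmetric]
    by (simp add: field_simps)
  ultimately show ?thesis by linarith
qed

end
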